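(* Let $W$ be a graded CLSAS on $\mathcal{W}$, regarded as a $\mathcal{W}$-module via left multiplication. Then $W$ is not isomorphic to $A_\gamma$ for any $\gamma\in\mathbb{C}$.
   Context: $G$ is a free (additive) subgroup of $\mathbb{C}$ of rank $\nu>1$. The high rank Witt algebra $\mathcal{W}$ has basis $\{L_a\mid a\in G\}$ and bracket $[L_a,L_b]=(b-a)L_{a+b}$. A left-symmetric algebra is a complex vector space with bilinear product satisfying $(xy)z-x(yz)=(yx)z-y(xz)$; a compatible left-symmetric algebraic structure (CLSAS) on a Lie algebra $\mathfrak g$ is such a product on $\mathfrak g$ with $xy-yx=[x,y]$. A CLSAS on $\mathcal{W}$ is graded if $L_aL_b=f(a,b)L_{a+b}$ for some function $f:G\times G\to\mathbb{C}$. The $\mathcal{W}$-module $A_\gamma$ ($\gamma\in\mathbb{C}$) has basis $\{v_b\mid b\in G\}$ and action $L_av_b=(a+b)v_{a+b}$ if $b\neq0$, $L_av_0=a(\gamma+a)v_a$. *)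

theory Defs
  imports Main Complex_Main
begin

definition int_comb :: "complex set \<Rightarrow> complex set" where
  "int_comb B = {(\<Sum>b\<in>S. of_int (c b) * b) | S c. finite S \<and> S \<subseteq> B}"

definition int_indep :: "complex set \<Rightarrow> bool" where
  "int_indep B \<longleftrightarrow> (\<forall>S c. finite S \<and> S \<subseteq> B \<and> (\<Sum>b\<in>S. of_int (c b) * b) = 0
                         \<longrightarrow> (\<forall>b\<in>S. c b = (0::int)))"

definition free_subgroup_rank_gt1 :: "complex set \<Rightarrow> bool" where
  "free_subgroup_rank_gt1 G \<longleftrightarrow>
     0 \<in> G \<and> (\<forall>x\<in>G. \<forall>y\<in>G. x + y \<in> G \<and> - x \<in> G) \<and>
     (\<exists>B. B \<subseteq> G \<and> int_indep B \<and> int_comb B = G \<and> (\<exists>b1\<in>B. \<exists>b2\<in>B. b1 \<noteq> b2))"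

text \<open>The underlying space: finitely supported complex functions on G
  (coefficients with respect to the basis {L_a} resp. {v_b}).\<close>

definition supp :: "(complex \<Rightarrow> complex) \<Rightarrow> complex set" where
  "supp v = {x. v x \<noteq> 0}"

definition Vsp :: "complex set \<Rightarrow> (complex \<Rightarrow> complex) set" where
  "Vsp G = {v. finite (supp v) \<and> supp v \<subseteq> G}"

text \<open>Bilinear product on the Witt algebra given by structure function f:
  L_a L_b = f a b L_{a+b}.\<close>

definition gmult :: "(complex \<Rightarrow> complex \<Rightarrow> complex) \<Rightarrow>
    (complex \<Rightarrow> complex) \<Rightarrow> (complex \<Rightarrow> complex) \<Rightarrow> (complex \<Rightarrow> complex)" where
  "gmult f x y = (\<lambda>c. \<Sum>a\<in>supp x. f a (c - a) * x a * y (c - a))"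

definition witt_bracket :: "(complex \<Rightarrow> complex) \<Rightarrow> (complex \<Rightarrow> complex) \<Rightarrow> (complex \<Rightarrow> complex)" where
  "witt_bracket x y = gmult (\<lambda>a b. b - a) x y"

definition graded_CLSAS :: "complex set \<Rightarrow> (complex \<Rightarrow> complex \<Rightarrow> complex) \<Rightarrow> bool" where
  "graded_CLSAS G f \<longleftrightarrow>
     (\<forall>x\<in>Vsp G. \<forall>y\<in>Vsp G. \<forall>z\<in>Vsp G.
        (\<lambda>c. gmult f (gmult f x y) z c - gmult f x (gmult f y z) c)
      = (\<lambda>c. gmult f (gmult f y x) z c - gmult f y (gmult f x z) c)) \<and>
     (\<forall>x\<in>Vsp G. \<forall>y\<in>Vsp G.
        (\<lambda>c. gmult f x y c - gmult f y x c) = witt_bracket x y)"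

text \<open>The W-module A_gamma: L_a v_b = (a+b) v_{a+b} (b \<noteq> 0), L_a v_0 = a(gamma+a) v_a,
  extended bilinearly.\<close>

definition A_act :: "complex \<Rightarrow> (complex \<Rightarrow> complex) \<Rightarrow> (complex \<Rightarrow> complex) \<Rightarrow> (complex \<Rightarrow> complex)" where
  "A_act \<gamma> x v = (\<lambda>c. \<Sum>a\<in>supp x. x a *
       (if c = a then a * (\<gamma> + a) * v 0 else c * v (c - a)))"

definition module_iso_W_A ::
  "complex set \<Rightarrow> (complex \<Rightarrow> complex \<Rightarrow> complex) \<Rightarrow> complex \<Rightarrow>
   ((complex \<Rightarrow> complex) \<Rightarrow> (complex \<Rightarrow> complex)) \<Rightarrow> bool" where
  "module_iso_W_A G f \<gamma> \<phi> \<longleftrightarrow>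
     bij_betw \<phi> (Vsp G) (Vsp G) \<and>
     (\<forall>u\<in>Vsp G. \<forall>v\<in>Vsp G. \<phi> (\<lambda>c. u c + v c) = (\<lambda>c. \<phi> u c + \<phi> v c)) \<and>
     (\<forall>k. \<forall>v\<in>Vsp G. \<phi> (\<lambda>c. k * v c) = (\<lambda>c. k * \<phi> v c)) \<and>
     (\<forall>x\<in>Vsp G. \<forall>v\<in>Vsp G. \<phi> (gmult f x v) = A_act \<gamma> x (\<phi> v))"

end

theory Submission
  imports Defs
begin

text \<open>In \<open>A\<^sub>\<gamma>\<close> no vector of the form \<open>L\<^sub>a v\<close> has a \<open>v\<^sub>0\<close>-component: the only term that could land
  on \<open>v\<^sub>0\<close> is \<open>L\<^sub>0 v\<^sub>0 = 0\<cdot>(\<gamma>+0) v\<^sub>0\<close>. A module isomorphism \<open>\<phi> : W \<rightarrow> A\<^sub>\<gamma>\<close> maps left products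
  \<open>L\<^sub>a L\<^sub>b\<close> to such vectors, hence also the brackets \<open>[L\<^sub>a, L\<^sub>b] = (b - a) L\<^sub>a\<^sub>+\<^sub>b\<close>. Since every
  \<open>L\<^sub>c\<close> is a nonzero multiple of a bracket (\<open>L\<^sub>c = c\<inverse>[L\<^sub>0, L\<^sub>c]\<close> for \<open>c \<noteq> 0\<close>,
  \<open>L\<^sub>0 = (2a)\<inverse>[L\<^sub>-\<^sub>a, L\<^sub>a]\<close>), by linearity the image of \<open>\<phi>\<close> misses \<open>v\<^sub>0\<close>, contradicting surjectivity.\<close>

definition delta :: "complex \<Rightarrow> complex \<Rightarrow> complex" where
  "delta b = (\<lambda>c. if c = b then 1 else 0)"

lemma supp_delta [simp]: "supp (delta a) = {a}"
  by (auto simp: supp_def delta_def)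

lemma delta_in_Vsp: "a \<in> G \<Longrightarrow> delta a \<in> Vsp G"
  by (simp add: Vsp_def)

lemma Vsp_scale: "v \<in> Vsp G \<Longrightarrow> (\<lambda>c. k * v c) \<in> Vsp G"
  by (auto simp: Vsp_def supp_def intro: finite_subset)

lemma gmult_delta_delta: "gmult f (delta a) (delta b) = (\<lambda>c. f a b * delta (a + b) c)"
  unfolding gmult_def supp_delta by (auto simp: delta_def fun_eq_iff algebra_simps)

lemma witt_bracket_delta_delta:
  "witt_bracket (delta a) (delta b) = (\<lambda>c. (b - a) * delta (a + b) c)"
  by (simp add: witt_bracket_def gmult_delta_delta)

lemma A_act_zero_coeff: "A_act \<gamma> x v 0 = 0"
  unfolding A_act_def by (rule sum.neutral) auto

lemma linear_vanishes_if_vanishes_on_deltas: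
  assumes add: "\<forall>u\<in>Vsp G. \<forall>v\<in>Vsp G. \<phi> (\<lambda>c. u c + v c) = (\<lambda>c. \<phi> u c + \<phi> v c)"
    and scale: "\<forall>k. \<forall>v\<in>Vsp G. \<phi> (\<lambda>c. k * v c) = (\<lambda>c. k * \<phi> v c)"
    and deltas: "\<forall>b\<in>G. \<phi> (delta b) d = 0"
    and x: "x \<in> Vsp G"
  shows "\<phi> x d = 0"
proof -
  have "\<phi> x d = 0" if "finite S" "supp x = S" "S \<subseteq> G" for S x
    using that
  proof (induction S arbitrary: x rule: finite_induct)
    case empty
    then have x_zero: "x = (\<lambda>c. 0)"
      by (auto simp: supp_def)
    then have "x \<in> Vsp G"
      by (simp add: Vsp_def supp_def)
    then have "\<phi> (\<lambda>c. 0 * x c) = (\<lambda>c. 0 * \<phi> x c)"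
      using scale by blast
    then show ?case
      using x_zero by simp
  next
    case (insert b S)
    define x' where "x' = x(b := 0)"
    have x'_supp: "supp x' = S"
      using insert.hyps(2) insert.prems(1) by (auto simp: supp_def x'_def)
    have x'_Vsp: "x' \<in> Vsp G"
      using x'_supp insert.hyps(1) insert.prems(2) by (auto simp: Vsp_def)
    have b: "delta b \<in> Vsp G"
      using insert.prems(2) by (simp add: delta_in_Vsp)
    have "x = (\<lambda>c. x' c + x b * delta b c)"
      by (auto simp: x'_def delta_def fun_eq_iff)
    then have "\<phi> x = \<phi> (\<lambda>c. x' c + x b * delta b c)"
      by (rule arg_cong)
    also have "\<phi> (\<lambda>c. x' c + x b * delta b c) = (\<lambda>c. \<phi> x' c + x b * \<phi> (delta b) c)"
      by (simp only: add[rule_format, OF x'_Vsp Vsp_scale[OF b]] scale[rule_format, OF b])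
    finally have "\<phi> x d = \<phi> x' d + x b * \<phi> (delta b) d"
      by simp
    then show ?case
      using insert.IH[OF x'_supp] insert.prems(2) deltas by simp
  qed
  then show ?thesis
    using x by (auto simp: Vsp_def)
qed

lemma module_iso_bracket_zero_coeff:
  assumes "graded_CLSAS G f" and iso: "module_iso_W_A G f \<gamma> \<phi>"
    and a: "a \<in> G" and b: "b \<in> G" and ab: "a + b \<in> G"
  shows "(b - a) * \<phi> (delta (a + b)) 0 = 0"
proof -
  have add: "\<forall>u\<in>Vsp G. \<forall>v\<in>Vsp G. \<phi> (\<lambda>c. u c + v c) = (\<lambda>c. \<phi> u c + \<phi> v c)"
    and scale: "\<forall>k. \<forall>v\<in>Vsp G. \<phi> (\<lambda>c. k * v c) = (\<lambda>c. k * \<phi> v c)"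
    and hom: "\<forall>x\<in>Vsp G. \<forall>v\<in>Vsp G. \<phi> (gmult f x v) = A_act \<gamma> x (\<phi> v)"
    using iso by (auto simp: module_iso_W_A_def)
  define P where "P = gmult f (delta a) (delta b)"
  define Q where "Q = gmult f (delta b) (delta a)"
  have P_Vsp: "P \<in> Vsp G" and Q_Vsp: "Q \<in> Vsp G"
    unfolding P_def Q_def gmult_delta_delta
    using Vsp_scale[OF delta_in_Vsp[OF ab]] by (simp_all add: add.commute)
  have "(\<lambda>c. P c - Q c) = witt_bracket (delta a) (delta b)"
    using assms(1) delta_in_Vsp[OF a] delta_in_Vsp[OF b]
    unfolding P_def Q_def graded_CLSAS_def by blast
  then have bracket: "(\<lambda>c. (b - a) * delta (a + b) c) = (\<lambda>c. P c + (- 1) * Q c)"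
    by (simp add: witt_bracket_delta_delta)
  have "\<phi> P 0 = 0" "\<phi> Q 0 = 0"
    unfolding P_def Q_def using hom delta_in_Vsp[OF a] delta_in_Vsp[OF b]
    by (simp_all add: A_act_zero_coeff)
  moreover have "\<phi> (\<lambda>c. P c + (- 1) * Q c) = (\<lambda>c. \<phi> P c + (- 1) * \<phi> Q c)"
    by (simp only: add[rule_format, OF P_Vsp Vsp_scale[OF Q_Vsp]] scale[rule_format, OF Q_Vsp])
  ultimately have "\<phi> (\<lambda>c. (b - a) * delta (a + b) c) 0 = 0"
    unfolding bracket by simp
  then show ?thesis
    using scale delta_in_Vsp[OF ab] by simp
qed

lemma module_iso_delta_zero_coeff:
  assumes G: "free_subgroup_rank_gt1 G" and "graded_CLSAS G f"
    and iso: "module_iso_W_A G f \<gamma> \<phi>" and c: "c \<in> G"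
  shows "\<phi> (delta c) 0 = 0"
proof -
  have closed: "\<forall>x\<in>G. \<forall>y\<in>G. x + y \<in> G \<and> - x \<in> G" and "0 \<in> G"
    using G by (auto simp: free_subgroup_rank_gt1_def)
  note bracket = module_iso_bracket_zero_coeff[OF assms(2) iso]
  show ?thesis
  proof (cases "c = 0")
    case True
    obtain a where a: "a \<in> G" "a \<noteq> 0"
      using G unfolding free_subgroup_rank_gt1_def by blast
    have "(2 * a) * \<phi> (delta 0) 0 = 0"
      using bracket[of "- a" a] a closed \<open>0 \<in> G\<close> by simp
    then show ?thesis
      using True a(2) by simp
  next
    case False
    then show ?thesis
      using bracket[of 0 c] \<open>0 \<in> G\<close> c by simp
  qed
qed

theorem theorem3p3:
  fixes G :: "complex set" and f :: "complex \<Rightarrow> complex \<Rightarrow> complex"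
  assumes "free_subgroup_rank_gt1 G"
    and "graded_CLSAS G f"
  shows "\<not> (\<exists>\<gamma> \<phi>. module_iso_W_A G f \<gamma> \<phi>)"
proof
  assume "\<exists>\<gamma> \<phi>. module_iso_W_A G f \<gamma> \<phi>"
  then obtain \<gamma> \<phi> where iso: "module_iso_W_A G f \<gamma> \<phi>"
    by blast
  then have bij: "bij_betw \<phi> (Vsp G) (Vsp G)"
    and add: "\<forall>u\<in>Vsp G. \<forall>v\<in>Vsp G. \<phi> (\<lambda>c. u c + v c) = (\<lambda>c. \<phi> u c + \<phi> v c)"
    and scale: "\<forall>k. \<forall>v\<in>Vsp G. \<phi> (\<lambda>c. k * v c) = (\<lambda>c. k * \<phi> v c)"
    by (simp_all add: module_iso_W_A_def)
  have "0 \<in> G"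
    using assms(1) by (simp add: free_subgroup_rank_gt1_def)
  then have "delta 0 \<in> \<phi> ` Vsp G"
    using bij delta_in_Vsp by (simp add: bij_betw_def)
  then obtain x where x: "x \<in> Vsp G" "\<phi> x = delta 0"
    by (metis imageE)
  have "\<phi> x 0 = 0"
    using linear_vanishes_if_vanishes_on_deltas[OF add scale _ x(1)]
      module_iso_delta_zero_coeff[OF assms iso] by blast
  then show False
    using x(2) by (simp add: delta_def)
qed

end
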